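(* Let $Z_i=(X_i,Y_i)$, $i=1,\dots,n+1$, be i.i.d. from a distribution on $\mathbb R^p\times\mathbb R$, let $V(\cdot)$ be a real-valued score function with $V_i=V(Z_i)$, and fix $\alpha\in(0,1)$. Consider the localizer $H(x_1,x_2)=\exp(-\|x_1-x_2\|/h)$ with $h>0$ such that $\mathbb P\big(\sum_{i=1}^{n+1}H(X_{n+1},X_i)<\frac{1}{1-\alpha}\big)\ge\varepsilon$ for some $\varepsilon\in(\alpha,1)$. Let $p^H_{n+1,j}=H(X_{n+1},X_j)/\sum_{k=1}^{n+1}H(X_{n+1},X_k)$ and $\hat{\mathcal F}=\sum_{j=1}^{n}p^H_{n+1,j}\delta_{V_j}+p^H_{n+1,n+1}\delta_{+\infty}$, and let $C(X_{n+1})=\{y: V(X_{n+1},y)\le Q(\alpha;\hat{\mathcal F})\}$. Then $$\mathbb P\big(Q(\alpha;\hat{\mathcal F})=\infty\big)\ge\varepsilon,\qquad \mathbb P\big(Y_{n+1}\in C(X_{n+1})\big)=\mathbb P\big(V_{n+1}\le Q(\alpha;\hat{\mathcal F})\big)\ge\varepsilon.$$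
   Context: For a distribution $\mathcal F$ on $\mathbb R\cup\{+\infty\}$, $Q(\alpha;\mathcal F)=\inf\{t:\mathbb P_{T\sim\mathcal F}(T\le t)\ge\alpha\}$; $\delta_v$ is the point mass at $v$; $\|\cdot\|$ is a norm on $\mathbb R^p$. *)

theory Defs
  imports "HOL-Probability.Probability"
begin

definition is_norm :: "(real ^ 'p \<Rightarrow> real) \<Rightarrow> bool" where
  "is_norm N \<longleftrightarrow> (\<forall>x. 0 \<le> N x) \<and> (\<forall>x. N x = 0 \<longleftrightarrow> x = 0)
     \<and> (\<forall>c x. N (c *\<^sub>R x) = \<bar>c\<bar> * N x) \<and> (\<forall>x y. N (x + y) \<le> N x + N y)"

text \<open>CDF of the finite discrete distribution sum of w * delta_v on the extended reals,
  given as a list of (weight, atom) pairs.\<close>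
definition disc_cdf :: "(real \<times> ereal) list \<Rightarrow> ereal \<Rightarrow> real" where
  "disc_cdf ms t = (\<Sum>(w, v) \<leftarrow> ms. if v \<le> t then w else 0)"

definition quantile :: "real \<Rightarrow> (ereal \<Rightarrow> real) \<Rightarrow> ereal" where
  "quantile \<alpha> F = Inf {t. F t \<ge> \<alpha>}"

definition localizer :: "(real ^ 'p \<Rightarrow> real) \<Rightarrow> real \<Rightarrow> real ^ 'p \<Rightarrow> real ^ 'p \<Rightarrow> real" where
  "localizer N h x1 x2 = exp (- N (x1 - x2) / h)"

definition pH :: "(real ^ 'p \<Rightarrow> real) \<Rightarrow> real \<Rightarrow> nat \<Rightarrow> (nat \<Rightarrow> real ^ 'p) \<Rightarrow> nat \<Rightarrow> real" where
  "pH N h n x j = localizer N h (x (n+1)) (x j) / (\<Sum>k=1..n+1. localizer N h (x (n+1)) (x k))"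

definition Fhat :: "(real ^ 'p \<Rightarrow> real) \<Rightarrow> real \<Rightarrow> nat \<Rightarrow> (nat \<Rightarrow> real ^ 'p) \<Rightarrow> (nat \<Rightarrow> real) \<Rightarrow> ereal \<Rightarrow> real" where
  "Fhat N h n x v = disc_cdf (map (\<lambda>j. (pH N h n x j, ereal (v j))) [1..<n+1] @ [(pH N h n x (n+1), \<infinity>)])"

end

theory Submission
  imports Defs
begin

text \<open>The atom at \<open>+\<infinity>\<close> carries the weight \<open>1 / L\<close>, where \<open>L = \<Sum>\<^sub>i H(X\<^sub>n\<^sub>+\<^sub>1, X\<^sub>i) \<ge> 1\<close>
  because \<open>H(x, x) = 1\<close>. Hence the finite atoms of \<open>F\<close> carry the mass \<open>1 - 1/L\<close>, and the
  \<open>\<alpha>\<close>-quantile is \<open>+\<infinity>\<close> exactly when \<open>1 - 1/L < \<alpha>\<close>, i.e. \<open>L < 1/(1 - \<alpha>)\<close>. On this event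
  every score lies below the quantile, so coverage holds pointwise: the i.i.d. hypothesis
  is only needed for the measurability of the \<open>(X\<^sub>i, Y\<^sub>i)\<close>.\<close>

lemma is_norm_zero: "is_norm N \<Longrightarrow> N 0 = 0"
  unfolding is_norm_def by blast

lemma is_norm_convex_on:
  fixes N :: "real ^ 'p \<Rightarrow> real"
  assumes "is_norm N"
  shows "convex_on UNIV N"
proof
  fix t :: real and x y :: "real ^ 'p"
  assume "t > 0" "t < 1"
  have "N ((1 - t) *\<^sub>R x + t *\<^sub>R y) \<le> N ((1 - t) *\<^sub>R x) + N (t *\<^sub>R y)"
    using assms unfolding is_norm_def by blast
  also have "\<dots> = (1 - t) * N x + t * N y"
    using assms \<open>t > 0\<close> \<open>t < 1\<close> by (simp add: is_norm_def)
  finally show "N ((1 - t) *\<^sub>R x + t *\<^sub>R y) \<le> (1 - t) * N x + t * N y" .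
qed simp

lemma borel_measurable_is_norm:
  assumes "is_norm N"
  shows "N \<in> borel_measurable borel"
  using convex_on_continuous[OF open_UNIV is_norm_convex_on[OF assms]]
  by (rule borel_measurable_continuous_onI)

lemma quantile_eq_infinity_iff: "quantile \<alpha> F = \<infinity> \<longleftrightarrow> (\<forall>t<\<infinity>. F t < \<alpha>)"
  unfolding quantile_def Inf_top_conv top_ereal_def[symmetric]
  by (auto simp: less_top[symmetric]) (metis not_le)

lemma ereal_le_quantile_iff: "r \<le> quantile \<alpha> F \<longleftrightarrow> (\<forall>t. \<alpha> \<le> F t \<longrightarrow> r \<le> t)"
  unfolding quantile_def by (auto simp: le_Inf_iff)

lemma disc_cdf_cong:
  assumes "\<And>w v. (w, v) \<in> set ms \<Longrightarrow> v \<le> s \<longleftrightarrow> v \<le> t"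
  shows "disc_cdf ms s = disc_cdf ms t"
  unfolding disc_cdf_def using assms by (intro arg_cong[where f = sum_list] map_cong) auto

lemma disc_cdf_below_infinity_less_iff:
  assumes "\<And>w v. (w, v) \<in> set ms \<Longrightarrow> 0 \<le> w"
  shows "(\<forall>t<\<infinity>. disc_cdf ms t < \<alpha>) \<longleftrightarrow> (\<Sum>(w, v) \<leftarrow> ms. if v < \<infinity> then w else 0) < \<alpha>"
proof
  define t\<^sub>0 where "t\<^sub>0 = Max (insert (-\<infinity>) {v. \<exists>w. (w, v) \<in> set ms \<and> v < \<infinity>})"
  have finite: "finite {v. \<exists>w. (w, v) \<in> set ms \<and> v < \<infinity>}"
    by (rule finite_subset[of _ "snd ` set ms"]) force+
  have "t\<^sub>0 < \<infinity>"
    unfolding t\<^sub>0_def using finite by (subst Max_less_iff) auto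
  have "v \<le> t\<^sub>0" if "(w, v) \<in> set ms" "v < \<infinity>" for w v
    unfolding t\<^sub>0_def using finite that by (intro Max_ge) auto
  then have "disc_cdf ms t\<^sub>0 = (\<Sum>(w, v) \<leftarrow> ms. if v < \<infinity> then w else 0)"
    unfolding disc_cdf_def using \<open>t\<^sub>0 < \<infinity>\<close>
    by (intro arg_cong[where f = sum_list] map_cong) auto
  moreover note \<open>t\<^sub>0 < \<infinity>\<close>
  moreover assume "\<forall>t<\<infinity>. disc_cdf ms t < \<alpha>"
  ultimately show "(\<Sum>(w, v) \<leftarrow> ms. if v < \<infinity> then w else 0) < \<alpha>" by metis
next
  assume less: "(\<Sum>(w, v) \<leftarrow> ms. if v < \<infinity> then w else 0) < \<alpha>"
  show "\<forall>t<\<infinity>. disc_cdf ms t < \<alpha>"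
  proof (intro allI impI)
    fix t :: ereal assume "t < \<infinity>"
    then have "disc_cdf ms t \<le> (\<Sum>(w, v) \<leftarrow> ms. if v < \<infinity> then w else 0)"
      unfolding disc_cdf_def using assms by (intro sum_list_mono) auto
    with less show "disc_cdf ms t < \<alpha>" by linarith
  qed
qed

text \<open>The CDF is constant between consecutive atoms, so it suffices to test it at the atoms.\<close>
lemma ereal_le_quantile_disc_cdf_iff:
  assumes "\<And>w v. (w, v) \<in> set ms \<Longrightarrow> 0 \<le> w" and "0 < \<alpha>"
  shows "r \<le> quantile \<alpha> (disc_cdf ms) \<longleftrightarrow> (\<forall>(w, v) \<in> set ms. v < r \<longrightarrow> disc_cdf ms v < \<alpha>)"
proof
  assume "r \<le> quantile \<alpha> (disc_cdf ms)"
  then show "\<forall>(w, v) \<in> set ms. v < r \<longrightarrow> disc_cdf ms v < \<alpha>"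
    unfolding ereal_le_quantile_iff using leD not_le by fastforce
next
  assume atoms: "\<forall>(w, v) \<in> set ms. v < r \<longrightarrow> disc_cdf ms v < \<alpha>"
  show "r \<le> quantile \<alpha> (disc_cdf ms)"
    unfolding ereal_le_quantile_iff
  proof (intro allI impI)
    fix t assume "\<alpha> \<le> disc_cdf ms t"
    define A where "A = {v. \<exists>w. (w, v) \<in> set ms \<and> v \<le> t}"
    have "finite A"
      by (rule finite_subset[of _ "snd ` set ms"]) (force simp: A_def)+
    have "A \<noteq> {}"
    proof
      assume "A = {}"
      then have "\<forall>(w, v) \<in> set ms. \<not> v \<le> t" by (auto simp: A_def)
      then have "disc_cdf ms t = 0"
        unfolding disc_cdf_def by (induction ms) auto
      with \<open>\<alpha> \<le> disc_cdf ms t\<close> \<open>0 < \<alpha>\<close> show False by simp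
    qed
    define u where "u = Max A"
    have "u \<in> A" unfolding u_def using \<open>finite A\<close> \<open>A \<noteq> {}\<close> by (rule Max_in)
    then obtain w where "(w, u) \<in> set ms" "u \<le> t" by (auto simp: A_def)
    have "v \<le> u" if "(w, v) \<in> set ms" "v \<le> t" for w v
      unfolding u_def using \<open>finite A\<close> that by (intro Max_ge) (auto simp: A_def)
    with \<open>u \<le> t\<close> have "disc_cdf ms u = disc_cdf ms t"
      by (intro disc_cdf_cong) (auto intro: order_trans)
    with \<open>\<alpha> \<le> disc_cdf ms t\<close> atoms \<open>(w, u) \<in> set ms\<close> have "\<not> u < r" by fastforce
    with \<open>u \<le> t\<close> show "r \<le> t" by simp
  qed
qed

lemma localizer_pos: "0 < localizer N h x y"
  by (simp add: localizer_def)

lemma localizer_self: "is_norm N \<Longrightarrow> localizer N h x x = 1"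
  by (simp add: localizer_def is_norm_zero)

lemma pH_nonneg: "0 \<le> pH N h n x j"
  unfolding pH_def using localizer_pos
  by (intro divide_nonneg_pos less_imp_le sum_pos) auto

lemma Fhat_eq_sum:
  "Fhat N h n x v t = (\<Sum>k=1..n. if ereal (v k) \<le> t then pH N h n x k else 0)
      + (if t = \<infinity> then pH N h n x (n+1) else 0)"
  unfolding Fhat_def disc_cdf_def
  by (simp add: interv_sum_list_conv_sum_set_nat atLeastLessThanSuc_atLeastAtMost del: upt_Suc)

lemma quantile_Fhat_eq_infinity_iff:
  assumes "is_norm N" "\<alpha> < 1"
  shows "quantile \<alpha> (Fhat N h n x v) = \<infinity>
    \<longleftrightarrow> (\<Sum>k=1..n+1. localizer N h (x (n+1)) (x k)) < 1 / (1 - \<alpha>)"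
proof -
  define L where "L = (\<Sum>k=1..n+1. localizer N h (x (n+1)) (x k))"
  have L: "L = (\<Sum>k=1..n. localizer N h (x (n+1)) (x k)) + 1"
    unfolding L_def using localizer_self[OF assms(1)] by simp
  have "1 \<le> L"
    unfolding L by (simp add: sum_nonneg less_imp_le[OF localizer_pos])
  have "quantile \<alpha> (Fhat N h n x v) = \<infinity> \<longleftrightarrow> (\<Sum>k=1..n. pH N h n x k) < \<alpha>"
    unfolding quantile_eq_infinity_iff Fhat_def
    by (subst disc_cdf_below_infinity_less_iff)
      (auto simp: pH_nonneg interv_sum_list_conv_sum_set_nat atLeastLessThanSuc_atLeastAtMost
        simp del: upt_Suc)
  also have "(\<Sum>k=1..n. pH N h n x k) = (\<Sum>k=1..n. localizer N h (x (n+1)) (x k)) / L"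
    by (simp add: pH_def L_def sum_divide_distrib)
  also have "\<dots> = (L - 1) / L"
    using L by simp
  also have "(L - 1) / L < \<alpha> \<longleftrightarrow> L < 1 / (1 - \<alpha>)"
    using \<open>1 \<le> L\<close> assms(2) by (simp add: field_simps)
  finally show ?thesis unfolding L_def .
qed

lemma ereal_le_quantile_Fhat_iff:
  assumes "0 < \<alpha>"
  shows "ereal r \<le> quantile \<alpha> (Fhat N h n x v)
    \<longleftrightarrow> (\<forall>j\<in>{1..n}. v j < r \<longrightarrow> Fhat N h n x v (ereal (v j)) < \<alpha>)"
  unfolding Fhat_def
  by (subst ereal_le_quantile_disc_cdf_iff) (auto simp: pH_nonneg assms)

lemma sets_ereal_le_quantile_Fhat:
  assumes "is_norm N" "0 < \<alpha>"
    and X: "\<And>i. i \<in> {1..n+1} \<Longrightarrow> X i \<in> borel_measurable M"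
    and W: "\<And>i. i \<in> {1..n} \<Longrightarrow> W i \<in> borel_measurable M"
    and R: "R \<in> borel_measurable M"
  shows "{\<omega> \<in> space M. ereal (R \<omega>) \<le> quantile \<alpha> (Fhat N h n (\<lambda>i. X i \<omega>) (\<lambda>i. W i \<omega>))} \<in> sets M"
proof -
  note [measurable] = borel_measurable_is_norm[OF assms(1)] R
  have H [measurable]: "(\<lambda>\<omega>. localizer N h (X (n+1) \<omega>) (X k \<omega>)) \<in> borel_measurable M"
    if "k \<in> {1..n+1}" for k
    using X[OF that] X[of "n+1"] unfolding localizer_def by measurable
  have p [measurable]: "(\<lambda>\<omega>. pH N h n (\<lambda>i. X i \<omega>) k) \<in> borel_measurable M"
    if "k \<in> {1..n+1}" for k
    unfolding pH_def by (intro borel_measurable_divide borel_measurable_sum H that) auto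
  have F: "(\<lambda>\<omega>. Fhat N h n (\<lambda>i. X i \<omega>) (\<lambda>i. W i \<omega>) (ereal (W j \<omega>))) \<in> borel_measurable M"
    if j: "j \<in> {1..n}" for j
  proof -
    have "Fhat N h n (\<lambda>i. X i \<omega>) (\<lambda>i. W i \<omega>) (ereal (W j \<omega>))
        = (\<Sum>k=1..n. if W k \<omega> \<le> W j \<omega> then pH N h n (\<lambda>i. X i \<omega>) k else 0)" for \<omega>
      by (simp add: Fhat_eq_sum)
    moreover have "(\<lambda>\<omega>. if W k \<omega> \<le> W j \<omega> then pH N h n (\<lambda>i. X i \<omega>) k else 0)
        \<in> borel_measurable M" if k: "k \<in> {1..n}" for k
    proof -
      have "k \<in> {1..n+1}" using k by simp
      note [measurable] = W[OF j] W[OF k] p[OF this]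
      show ?thesis by measurable
    qed
    ultimately show ?thesis by simp
  qed
  show ?thesis
    unfolding ereal_le_quantile_Fhat_iff[OF assms(2)]
  proof (rule sets.sets_Collect_finite_All)
    fix j assume j: "j \<in> {1..n}"
    note [measurable] = W[OF j] F[OF j]
    show "{\<omega> \<in> space M. W j \<omega> < R \<omega>
        \<longrightarrow> Fhat N h n (\<lambda>i. X i \<omega>) (\<lambda>i. W i \<omega>) (ereal (W j \<omega>)) < \<alpha>} \<in> sets M"
      by measurable
  qed simp
qed

theorem proposition1:
  fixes M :: "'a measure"
    and X :: "nat \<Rightarrow> 'a \<Rightarrow> real ^ 'p" and Y :: "nat \<Rightarrow> 'a \<Rightarrow> real"
    and V :: "(real ^ 'p) \<times> real \<Rightarrow> real"
    and N :: "real ^ 'p \<Rightarrow> real"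
    and n :: nat and \<alpha> h \<epsilon> :: real
  assumes "prob_space M"
    and "is_norm N"
    and "prob_space.indep_vars M (\<lambda>_. borel) (\<lambda>i \<omega>. (X i \<omega>, Y i \<omega>)) {1..n+1}"
    and "\<forall>i\<in>{1..n+1}. distr M borel (\<lambda>\<omega>. (X i \<omega>, Y i \<omega>)) = distr M borel (\<lambda>\<omega>. (X 1 \<omega>, Y 1 \<omega>))"
    and "V \<in> borel_measurable borel"
    and "0 < \<alpha>" "\<alpha> < 1" "0 < h"
    and "\<alpha> < \<epsilon>" "\<epsilon> < 1"
    and "measure M {\<omega> \<in> space M. (\<Sum>i=1..n+1. localizer N h (X (n+1) \<omega>) (X i \<omega>)) < 1 / (1 - \<alpha>)} \<ge> \<epsilon>"
  shows "measure M {\<omega> \<in> space M.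
            quantile \<alpha> (Fhat N h n (\<lambda>j. X j \<omega>) (\<lambda>j. V (X j \<omega>, Y j \<omega>))) = \<infinity>} \<ge> \<epsilon>
     \<and> measure M {\<omega> \<in> space M. Y (n+1) \<omega> \<in>
            {y. ereal (V (X (n+1) \<omega>, y)) \<le> quantile \<alpha> (Fhat N h n (\<lambda>j. X j \<omega>) (\<lambda>j. V (X j \<omega>, Y j \<omega>)))}}
       = measure M {\<omega> \<in> space M.
            ereal (V (X (n+1) \<omega>, Y (n+1) \<omega>)) \<le> quantile \<alpha> (Fhat N h n (\<lambda>j. X j \<omega>) (\<lambda>j. V (X j \<omega>, Y j \<omega>)))}
     \<and> measure M {\<omega> \<in> space M.
            ereal (V (X (n+1) \<omega>, Y (n+1) \<omega>)) \<le> quantile \<alpha> (Fhat N h n (\<lambda>j. X j \<omega>) (\<lambda>j. V (X j \<omega>, Y j \<omega>)))} \<ge> \<epsilon>"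
proof -
  interpret prob_space M by (rule assms(1))
  define Q where "Q \<omega> = quantile \<alpha> (Fhat N h n (\<lambda>j. X j \<omega>) (\<lambda>j. V (X j \<omega>, Y j \<omega>)))" for \<omega>
  have XY: "(\<lambda>\<omega>. (X i \<omega>, Y i \<omega>)) \<in> borel_measurable M" if "i \<in> {1..n+1}" for i
    using assms(3) that unfolding indep_vars_def by auto
  have X: "X i \<in> borel_measurable M" if "i \<in> {1..n+1}" for i
    using XY[OF that] unfolding borel_prod[symmetric] measurable_pair_iff by (simp add: o_def)
  have W: "(\<lambda>\<omega>. V (X i \<omega>, Y i \<omega>)) \<in> borel_measurable M" if "i \<in> {1..n+1}" for i
    using measurable_compose[OF XY[OF that] assms(5)] .
  define A where "A = {\<omega> \<in> space M. Q \<omega> = \<infinity>}"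
  define C where "C = {\<omega> \<in> space M. ereal (V (X (n+1) \<omega>, Y (n+1) \<omega>)) \<le> Q \<omega>}"
  have "A = {\<omega> \<in> space M. (\<Sum>i=1..n+1. localizer N h (X (n+1) \<omega>) (X i \<omega>)) < 1 / (1 - \<alpha>)}"
    unfolding A_def Q_def quantile_Fhat_eq_infinity_iff[OF assms(2,7)] ..
  with assms(11) have "\<epsilon> \<le> measure M A" by simp
  also have "measure M A \<le> measure M C"
  proof (rule finite_measure_mono)
    show "A \<subseteq> C" unfolding A_def C_def by auto
    show "C \<in> sets M"
      unfolding C_def Q_def using assms(2,6) X W by (intro sets_ereal_le_quantile_Fhat) auto
  qed
  finally show ?thesis using \<open>\<epsilon> \<le> measure M A\<close> unfolding A_def C_def Q_def by simp
qed

end
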